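(* Let $\Re$ be a commutative Krasner hyperring with identity $1\ne0$ and $\phi:L(\Re)\to L(\Re)\cup\{\emptyset\}$ a function with $\phi\le\phi_3$. If $T$ is a proper $\phi$-primary hyperideal of $\Re$, then $T$ is a $w$-primary hyperideal.
   Context: Krasner hyperring: $(\Re,\oplus)$ canonical hypergroup, $(\Re,\circ)$ commutative semigroup with identity $1\ne0$, $0$ absorbing, distributive. Hyperideals, $L(\Re)$, powers $N^n$ as usual. $\phi_3(N)=N^3$, $\phi_w(N)=\bigcap_{n\ge1}N^n$; $\phi\le\phi_3$ means $\phi(N)\subseteq N^3$ for all $N$. $N$ is $\sigma$-primary if $a\circ b\in N$, $a\circ b\notin\sigma(N)$ imply $a\in N$ or $b^k\in N$ for some $k\in\mathbb{N}$; $w$-primary means $\phi_w$-primary. *)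

theory Defs
  imports Main
begin

text \<open>A Krasner hyperring on the whole type 'a: hyperaddition, multiplication,
  zero, one, and the (unique) additive inverse.\<close>

record 'a hyperring =
  hadd :: "'a \<Rightarrow> 'a \<Rightarrow> 'a set"
  hmul :: "'a \<Rightarrow> 'a \<Rightarrow> 'a"
  hzero :: 'a
  hone :: 'a
  hneg :: "'a \<Rightarrow> 'a"

definition set_hadd :: "('a, 'b) hyperring_scheme \<Rightarrow> 'a set \<Rightarrow> 'a set \<Rightarrow> 'a set" where
  "set_hadd R A B = (\<Union>a\<in>A. \<Union>b\<in>B. hadd R a b)"

definition canonical_hypergroup :: "('a, 'b) hyperring_scheme \<Rightarrow> bool" where
  "canonical_hypergroup R \<longleftrightarrow>
     (\<forall>x y. hadd R x y \<noteq> {}) \<and>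
     (\<forall>x y z. set_hadd R (hadd R x y) {z} = set_hadd R {x} (hadd R y z)) \<and>
     (\<forall>x y. hadd R x y = hadd R y x) \<and>
     (\<forall>x. hadd R (hzero R) x = {x}) \<and>
     (\<forall>x. hzero R \<in> hadd R x (hneg R x)) \<and>
     (\<forall>x y. hzero R \<in> hadd R x y \<longrightarrow> y = hneg R x) \<and>
     (\<forall>x y z. z \<in> hadd R x y \<longrightarrow> y \<in> hadd R (hneg R x) z \<and> x \<in> hadd R z (hneg R y))"

definition krasner_hyperring :: "('a, 'b) hyperring_scheme \<Rightarrow> bool" where
  "krasner_hyperring R \<longleftrightarrow>
     canonical_hypergroup R \<and>
     (\<forall>x y z. hmul R (hmul R x y) z = hmul R x (hmul R y z)) \<and>
     (\<forall>x y. hmul R x y = hmul R y x) \<and>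
     (\<forall>x. hmul R (hone R) x = x) \<and>
     hone R \<noteq> hzero R \<and>
     (\<forall>x. hmul R (hzero R) x = hzero R) \<and>
     (\<forall>x y z. hmul R z ` hadd R x y = hadd R (hmul R z x) (hmul R z y))"

definition hyperideal :: "('a, 'b) hyperring_scheme \<Rightarrow> 'a set \<Rightarrow> bool" where
  "hyperideal R I \<longleftrightarrow> I \<noteq> {} \<and>
     (\<forall>a\<in>I. \<forall>b\<in>I. hadd R a (hneg R b) \<subseteq> I) \<and>
     (\<forall>a\<in>I. \<forall>r. hmul R r a \<in> I)"

definition hyperideals :: "('a, 'b) hyperring_scheme \<Rightarrow> 'a set set" where
  "hyperideals R = {I. hyperideal R I}"

fun hsum :: "('a, 'b) hyperring_scheme \<Rightarrow> 'a list \<Rightarrow> 'a set" where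
  "hsum R [] = {hzero R}"
| "hsum R (x # xs) = set_hadd R {x} (hsum R xs)"

definition ideal_prod :: "('a, 'b) hyperring_scheme \<Rightarrow> 'a set \<Rightarrow> 'a set \<Rightarrow> 'a set" where
  "ideal_prod R I J =
     {z. \<exists>ps. ps \<noteq> [] \<and> (\<forall>p\<in>set ps. fst p \<in> I \<and> snd p \<in> J) \<and>
            z \<in> hsum R (map (\<lambda>p. hmul R (fst p) (snd p)) ps)}"

text \<open>Powers N^n for n \<ge> 1 (N^0 is set to the whole ring, unused).\<close>
fun ideal_pow :: "('a, 'b) hyperring_scheme \<Rightarrow> 'a set \<Rightarrow> nat \<Rightarrow> 'a set" where
  "ideal_pow R N 0 = UNIV"
| "ideal_pow R N (Suc 0) = N"
| "ideal_pow R N (Suc (Suc n)) = ideal_prod R (ideal_pow R N (Suc n)) N"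

fun elem_pow :: "('a, 'b) hyperring_scheme \<Rightarrow> 'a \<Rightarrow> nat \<Rightarrow> 'a" where
  "elem_pow R b 0 = hone R"
| "elem_pow R b (Suc k) = hmul R b (elem_pow R b k)"

definition phi_3 :: "('a, 'b) hyperring_scheme \<Rightarrow> 'a set \<Rightarrow> 'a set" where
  "phi_3 R N = ideal_pow R N 3"

definition phi_w :: "('a, 'b) hyperring_scheme \<Rightarrow> 'a set \<Rightarrow> 'a set" where
  "phi_w R N = (\<Inter>n\<in>{1..}. ideal_pow R N n)"

text \<open>sigma-primary hyperideal (properness is stated separately).\<close>
definition sigma_primary ::
  "('a, 'b) hyperring_scheme \<Rightarrow> ('a set \<Rightarrow> 'a set) \<Rightarrow> 'a set \<Rightarrow> bool" where
  "sigma_primary R \<sigma> N \<longleftrightarrow> hyperideal R N \<and>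
     (\<forall>a b. hmul R a b \<in> N \<and> hmul R a b \<notin> \<sigma> N \<longrightarrow>
        a \<in> N \<or> (\<exists>k\<ge>1. elem_pow R b k \<in> N))"

definition w_primary :: "('a, 'b) hyperring_scheme \<Rightarrow> 'a set \<Rightarrow> bool" where
  "w_primary R N \<longleftrightarrow> sigma_primary R (phi_w R) N"

end

theory Submission
  imports Defs
begin

text \<open>Suppose ab \<in> T, ab \<notin> phi_w(T), a \<notin> T and no power of b lies in T.
  Then ab \<in> phi(T), and (a, b) is a twin zero. Perturbing a or b by an element of T
  yields again a twin zero (as b and b + x have the same powers modulo T), and cancelling
  in the hyperideal phi(T) shows first aT \<subseteq> phi(T) and then T^2 \<subseteq> phi(T).
  Hence T^2 \<subseteq> phi(T) \<subseteq> T^3 \<subseteq> T^2, so the powers of T are constant from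
  T^2 on and phi_w(T) = T^2 contains phi(T) \<ni> ab, a contradiction.\<close>

lemma ideal_prod_mono_left: "I \<subseteq> I' \<Longrightarrow> ideal_prod R I J \<subseteq> ideal_prod R I' J"
  unfolding ideal_prod_def by blast

lemma ideal_pow_2: "ideal_pow R N 2 = ideal_prod R N N"
  by (simp add: numeral_eq_Suc)

lemma ideal_pow_3: "ideal_pow R N 3 = ideal_prod R (ideal_prod R N N) N"
  by (simp add: numeral_eq_Suc)

lemma square_subset_ideal_pow:
  assumes square_cube: "ideal_prod R N N \<subseteq> ideal_pow R N 3" and "2 \<le> n"
  shows "ideal_prod R N N \<subseteq> ideal_pow R N n"
  using \<open>2 \<le> n\<close>
proof (induction n rule: dec_induct)
  case base
  then show ?case by (simp add: ideal_pow_2)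
next
  case (step n)
  then obtain m where "n = Suc m" by (cases n) auto
  then have "ideal_pow R N (Suc n) = ideal_prod R (ideal_pow R N n) N" by simp
  then have "ideal_pow R N 3 \<subseteq> ideal_pow R N (Suc n)"
    using ideal_prod_mono_left[OF step.IH] by (simp add: ideal_pow_3)
  with square_cube show ?case by blast
qed

lemma phi_w_eq_square:
  assumes "ideal_prod R N N \<subseteq> N" "ideal_prod R N N \<subseteq> ideal_pow R N 3"
  shows "phi_w R N = ideal_prod R N N"
proof
  have "phi_w R N \<subseteq> ideal_pow R N 2"
    unfolding phi_w_def by (rule INT_lower) simp
  then show "phi_w R N \<subseteq> ideal_prod R N N"
    by (simp add: ideal_pow_2)
  have "ideal_prod R N N \<subseteq> ideal_pow R N n" if "1 \<le> n" for n
  proof (cases "n = 1")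
    case True
    with assms(1) show ?thesis by simp
  next
    case False
    with that assms(2) show ?thesis by (simp add: square_subset_ideal_pow)
  qed
  then show "ideal_prod R N N \<subseteq> phi_w R N"
    unfolding phi_w_def by blast
qed

text \<open>The primary analogue of the twin zeros of phi-prime ideals (Anderson and Bataineh).\<close>
definition twin_zero ::
  "('a, 'b) hyperring_scheme \<Rightarrow> ('a set \<Rightarrow> 'a set) \<Rightarrow> 'a set \<Rightarrow> 'a \<Rightarrow> 'a \<Rightarrow> bool" where
  "twin_zero R \<sigma> T a b \<longleftrightarrow> hmul R a b \<in> \<sigma> T \<and> a \<notin> T \<and> (\<forall>k\<ge>1. elem_pow R b k \<notin> T)"

lemma sigma_primary_twin_zeroI:
  "sigma_primary R \<sigma> T \<Longrightarrow> hmul R a b \<in> T \<Longrightarrow> a \<notin> T \<Longrightarrow> \<forall>k\<ge>1. elem_pow R b k \<notin> T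
    \<Longrightarrow> twin_zero R \<sigma> T a b"
  by (auto simp: sigma_primary_def twin_zero_def)

locale krasner =
  fixes R :: "('a, 'b) hyperring_scheme"
  assumes krasner_hyperring: "krasner_hyperring R"
begin

sublocale hmul: comm_monoid "hmul R" "hone R"
  using krasner_hyperring by unfold_locales (auto simp: krasner_hyperring_def)

lemma mul_zero_left: "hmul R (hzero R) x = hzero R"
  using krasner_hyperring unfolding krasner_hyperring_def by blast

lemma mul_mem_hadd: "w \<in> hadd R x y \<Longrightarrow> hmul R z w \<in> hadd R (hmul R z x) (hmul R z y)"
  using krasner_hyperring unfolding krasner_hyperring_def by (metis imageI)

lemma canonical_hypergroup: "canonical_hypergroup R"
  using krasner_hyperring by (simp add: krasner_hyperring_def)

lemma hadd_nonempty: "hadd R x y \<noteq> {}"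
  using canonical_hypergroup by (simp add: canonical_hypergroup_def)

lemma hadd_commute: "hadd R x y = hadd R y x"
  using canonical_hypergroup unfolding canonical_hypergroup_def by blast

lemma zero_hadd: "hadd R (hzero R) x = {x}"
  using canonical_hypergroup unfolding canonical_hypergroup_def by blast

lemma neg_unique: "hzero R \<in> hadd R x y \<Longrightarrow> y = hneg R x"
  using canonical_hypergroup by (simp add: canonical_hypergroup_def)

lemma zero_mem_hadd_neg: "hzero R \<in> hadd R x (hneg R x)"
  using canonical_hypergroup by (simp add: canonical_hypergroup_def)

lemma hadd_reversible: "z \<in> hadd R x y \<Longrightarrow> y \<in> hadd R (hneg R x) z"
  using canonical_hypergroup by (simp add: canonical_hypergroup_def)

lemma neg_neg: "hneg R (hneg R x) = x"
  using neg_unique[of "hneg R x" x] zero_mem_hadd_neg[of x] hadd_commute by simp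

lemma hyperideal_mul_left: "hyperideal R I \<Longrightarrow> x \<in> I \<Longrightarrow> hmul R r x \<in> I"
  by (simp add: hyperideal_def)

lemma hyperideal_mul_right: "hyperideal R I \<Longrightarrow> x \<in> I \<Longrightarrow> hmul R x r \<in> I"
  using hmul.commute[of x r] by (simp add: hyperideal_def)

lemma hyperideal_zero: "hyperideal R I \<Longrightarrow> hzero R \<in> I"
  unfolding hyperideal_def by (metis all_not_in_conv mul_zero_left)

lemma hyperideal_neg: "hyperideal R I \<Longrightarrow> x \<in> I \<Longrightarrow> hneg R x \<in> I"
  using hyperideal_zero[of I] zero_hadd[of "hneg R x"] by (auto simp: hyperideal_def)

lemma hyperideal_hadd_subset:
  assumes "hyperideal R I" "x \<in> I" "y \<in> I"
  shows "hadd R x y \<subseteq> I"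
proof -
  have "hadd R x (hneg R (hneg R y)) \<subseteq> I"
    using assms(1,2) hyperideal_neg[OF assms(1,3)] by (simp add: hyperideal_def)
  then show ?thesis
    by (simp add: neg_neg)
qed

lemma hyperideal_hadd_cancel_left:
  assumes "hyperideal R I" "z \<in> hadd R x y" "z \<in> I" "x \<in> I"
  shows "y \<in> I"
  using hadd_reversible[OF assms(2)] hyperideal_hadd_subset[OF assms(1) hyperideal_neg[OF assms(1,4)] assms(3)]
  by blast

lemma hyperideal_hadd_cancel_right:
  assumes "hyperideal R I" "z \<in> hadd R x y" "z \<in> I" "y \<in> I"
  shows "x \<in> I"
  using hyperideal_hadd_cancel_left[OF assms(1) _ assms(3,4)] assms(2) hadd_commute[of x y] by simp

lemma hyperideal_hsum_subset: "hyperideal R I \<Longrightarrow> set xs \<subseteq> I \<Longrightarrow> hsum R xs \<subseteq> I"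
  by (induction xs) (auto simp: set_hadd_def hyperideal_zero dest: hyperideal_hadd_subset)

lemma ideal_prod_subset_hyperideal:
  assumes "hyperideal R K" "\<And>x y. x \<in> I \<Longrightarrow> y \<in> J \<Longrightarrow> hmul R x y \<in> K"
  shows "ideal_prod R I J \<subseteq> K"
proof
  fix z assume "z \<in> ideal_prod R I J"
  then obtain ps where "\<forall>p\<in>set ps. fst p \<in> I \<and> snd p \<in> J"
    and z: "z \<in> hsum R (map (\<lambda>p. hmul R (fst p) (snd p)) ps)"
    by (auto simp: ideal_prod_def)
  then have "set (map (\<lambda>p. hmul R (fst p) (snd p)) ps) \<subseteq> K"
    using assms(2) by auto
  then show "z \<in> K"
    using z hyperideal_hsum_subset[OF assms(1)] by blast
qed

lemma mul_elem_pow_mem_of_hadd: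
  assumes I: "hyperideal R I" and c: "c \<in> hadd R b x" and x: "x \<in> I"
  shows "hmul R m (elem_pow R c k) \<in> I \<Longrightarrow> hmul R m (elem_pow R b k) \<in> I"
proof (induction k arbitrary: m)
  case 0
  then show ?case by simp
next
  case (Suc k)
  have mul_c_imp_mul_b: "hmul R n b \<in> I" if "hmul R n c \<in> I" for n
    using hyperideal_hadd_cancel_right[OF I mul_mem_hadd[OF c] that hyperideal_mul_left[OF I x]] .
  have "hmul R (hmul R m c) (elem_pow R c k) \<in> I"
    using Suc.prems by (simp add: hmul.assoc)
  then have "hmul R (hmul R m c) (elem_pow R b k) \<in> I"
    by (rule Suc.IH)
  then have "hmul R (hmul R m (elem_pow R b k)) c \<in> I"
    by (simp add: hmul.assoc hmul.commute hmul.left_commute)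
  then have "hmul R (hmul R m (elem_pow R b k)) b \<in> I"
    by (rule mul_c_imp_mul_b)
  then show ?case
    by (simp add: hmul.assoc hmul.commute hmul.left_commute)
qed

lemma elem_pow_mem_of_hadd:
  "hyperideal R I \<Longrightarrow> c \<in> hadd R b x \<Longrightarrow> x \<in> I \<Longrightarrow> elem_pow R c k \<in> I \<Longrightarrow> elem_pow R b k \<in> I"
  using mul_elem_pow_mem_of_hadd[of I c b x "hone R" k] by simp

lemma hyperideal_square_subset: "hyperideal R I \<Longrightarrow> ideal_prod R I I \<subseteq> I"
  by (rule ideal_prod_subset_hyperideal) (simp_all add: hyperideal_mul_right)

context
  fixes \<sigma> :: "'a set \<Rightarrow> 'a set" and T :: "'a set"
  assumes primary: "sigma_primary R \<sigma> T"
    and hyperideal_\<sigma>: "hyperideal R (\<sigma> T)"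
    and \<sigma>_subset: "\<sigma> T \<subseteq> T"
begin

lemma hyperideal_T: "hyperideal R T"
  using primary by (simp add: sigma_primary_def)

lemma twin_zero_hadd_right:
  assumes ab: "twin_zero R \<sigma> T a b" and x: "x \<in> T" and d: "d \<in> hadd R b x"
  shows "twin_zero R \<sigma> T a d"
proof (rule sigma_primary_twin_zeroI[OF primary])
  have "hmul R a b \<in> T"
    using ab \<sigma>_subset by (auto simp: twin_zero_def)
  then show "hmul R a d \<in> T"
    using mul_mem_hadd[OF d] hyperideal_hadd_subset[OF hyperideal_T _ hyperideal_mul_left[OF hyperideal_T x]]
    by blast
  show "a \<notin> T" "\<forall>k\<ge>1. elem_pow R d k \<notin> T"
    using ab elem_pow_mem_of_hadd[OF hyperideal_T d x] by (auto simp: twin_zero_def)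
qed

lemma twin_zero_hadd_left:
  assumes ab: "twin_zero R \<sigma> T a b" and y: "y \<in> T" and c: "c \<in> hadd R a y"
  shows "twin_zero R \<sigma> T c b"
proof (rule sigma_primary_twin_zeroI[OF primary])
  have "hmul R b a \<in> T"
    using ab \<sigma>_subset hmul.commute[of b a] by (auto simp: twin_zero_def)
  then have "hmul R b c \<in> T"
    using mul_mem_hadd[OF c] hyperideal_hadd_subset[OF hyperideal_T _ hyperideal_mul_left[OF hyperideal_T y]]
    by blast
  then show "hmul R c b \<in> T"
    by (simp add: hmul.commute)
  show "c \<notin> T"
  proof
    assume "c \<in> T"
    then have "a \<in> T"
      using hyperideal_hadd_cancel_right[OF hyperideal_T c _ y] by blast
    with ab show False
      by (simp add: twin_zero_def)
  qed
  show "\<forall>k\<ge>1. elem_pow R b k \<notin> T"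
    using ab by (simp add: twin_zero_def)
qed

lemma twin_zero_mul_right:
  assumes ab: "twin_zero R \<sigma> T a b" and x: "x \<in> T"
  shows "hmul R a x \<in> \<sigma> T"
proof -
  obtain d where d: "d \<in> hadd R b x"
    using hadd_nonempty by blast
  have "hmul R a d \<in> \<sigma> T" "hmul R a b \<in> \<sigma> T"
    using twin_zero_hadd_right[OF ab x d] ab by (simp_all add: twin_zero_def)
  then show ?thesis
    using hyperideal_hadd_cancel_left[OF hyperideal_\<sigma> mul_mem_hadd[OF d]] by blast
qed

lemma twin_zero_square_subset:
  assumes ab: "twin_zero R \<sigma> T a b"
  shows "ideal_prod R T T \<subseteq> \<sigma> T"
proof (rule ideal_prod_subset_hyperideal[OF hyperideal_\<sigma>])
  fix x y
  assume x: "x \<in> T" and y: "y \<in> T"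
  obtain c where c: "c \<in> hadd R a y"
    using hadd_nonempty by blast
  have "hmul R x c \<in> \<sigma> T"
    using twin_zero_mul_right[OF twin_zero_hadd_left[OF ab y c] x] by (simp add: hmul.commute)
  moreover have "hmul R x a \<in> \<sigma> T"
    using twin_zero_mul_right[OF ab x] by (simp add: hmul.commute)
  ultimately show "hmul R x y \<in> \<sigma> T"
    using hyperideal_hadd_cancel_left[OF hyperideal_\<sigma> mul_mem_hadd[OF c]] by blast
qed

end

end

theorem mainTheorem13:
  fixes R :: "('a, 'b) hyperring_scheme"
    and \<phi> :: "'a set \<Rightarrow> 'a set"
    and T :: "'a set"
  assumes "krasner_hyperring R"
    and "\<forall>N\<in>hyperideals R. \<phi> N \<in> hyperideals R \<or> \<phi> N = {}"
    and "\<forall>N\<in>hyperideals R. \<phi> N \<subseteq> phi_3 R N"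
    and "T \<noteq> UNIV"
    and "sigma_primary R \<phi> T"
  shows "w_primary R T"
proof -
  interpret krasner R
    using assms(1) by (rule krasner.intro)
  have T: "hyperideal R T"
    using assms(5) by (simp add: sigma_primary_def)
  have square_T: "ideal_prod R T T \<subseteq> T"
    using T by (rule hyperideal_square_subset)
  have phi_cube: "\<phi> T \<subseteq> ideal_pow R T 3"
    using assms(3) T by (simp add: phi_3_def hyperideals_def)
  have cube_square: "ideal_pow R T 3 \<subseteq> ideal_prod R T T"
    using ideal_prod_mono_left[OF square_T] by (simp add: ideal_pow_3)
  show ?thesis
    unfolding w_primary_def sigma_primary_def
  proof (intro conjI T allI impI)
    fix a b
    assume ab: "hmul R a b \<in> T \<and> hmul R a b \<notin> phi_w R T"
    show "a \<in> T \<or> (\<exists>k\<ge>1. elem_pow R b k \<in> T)"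
    proof (rule ccontr)
      assume "\<not> (a \<in> T \<or> (\<exists>k\<ge>1. elem_pow R b k \<in> T))"
      then have tz: "twin_zero R \<phi> T a b"
        using sigma_primary_twin_zeroI[OF assms(5)] ab by blast
      then have "hyperideal R (\<phi> T)"
        using assms(2) T by (auto simp: twin_zero_def hyperideals_def)
      then have "ideal_prod R T T \<subseteq> \<phi> T"
        using twin_zero_square_subset[OF assms(5) _ _ tz] phi_cube cube_square square_T by blast
      then have "phi_w R T = ideal_prod R T T"
        using phi_w_eq_square square_T phi_cube by blast
      with ab tz phi_cube cube_square show False
        by (auto simp: twin_zero_def)
    qed
  qed
qed

end
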